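(* Let $(X,\preceq,\{H_n\})$ be a half-space order and let a group $G$ act on $X$ by quasi-automorphisms. Let $T_X:G\to\mathbb{R}$, $T_X(g)=\lim_{n\to\infty}\frac{h(g^na,a)}{n}$ (any $a\in X$), be the associated translation number, and let $\leq$ be the relation on $G$ induced by the action. Then $T_X$ sandwiches $\leq$, i.e. there is $C>0$ such that $\{g\in G: T_X(g)\geq C\}\subset G^+:=\{g\in G: g\geq e\}$.
   Context: A half-space filtration of $X$ is $\{H_n\}_{n\in\mathbb{Z}}$ with $H_{n+1}\subsetneq H_n$, $\bigcap H_n=\emptyset$, $\bigcup H_n=X$; height $h(a)=\sup\{n: a\in H_n\}$, $h(a,b)=h(a)-h(b)$. A half-space order $(X,\preceq,\{H_n\})$: $(X,\preceq)$ a poset, $\{H_n\}$ a half-space filtration, and for a constant $w$, $h(a,b)\geq w\Rightarrow a\succeq b$. The $G$-action (by bijections, not necessarily order-preserving) is by quasi-automorphisms if for some $d$, $|h(ga,gb)-h(a,b)|\leq d$ for all $g,a,b$; the limit defining $T_X$ then exists and is independent of $a$. The induced relation on $G$ is $g\leq h\Leftrightarrow\forall k\in G\,\forall x\in X:\ (kg).x\preceq(kh).x$. *)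

theory Defs
  imports Complex_Main "HOL-Algebra.Group"
begin

definition half_space_filtration :: "(int \<Rightarrow> 'x set) \<Rightarrow> bool" where
  "half_space_filtration H \<longleftrightarrow>
     (\<forall>n. H (n + 1) \<subset> H n) \<and> (\<Inter>n. H n) = {} \<and> (\<Union>n. H n) = UNIV"

definition height :: "(int \<Rightarrow> 'x set) \<Rightarrow> 'x \<Rightarrow> int" where
  "height H a = Sup {n. a \<in> H n}"

definition height2 :: "(int \<Rightarrow> 'x set) \<Rightarrow> 'x \<Rightarrow> 'x \<Rightarrow> int" where
  "height2 H a b = height H a - height H b"

definition half_space_order :: "('x \<Rightarrow> 'x \<Rightarrow> bool) \<Rightarrow> (int \<Rightarrow> 'x set) \<Rightarrow> bool" where
  "half_space_order prec H \<longleftrightarrow>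
     (\<forall>a. prec a a) \<and> (\<forall>a b. prec a b \<and> prec b a \<longrightarrow> a = b) \<and>
     (\<forall>a b c. prec a b \<and> prec b c \<longrightarrow> prec a c) \<and>
     half_space_filtration H \<and>
     (\<exists>w::real. \<forall>a b. real_of_int (height2 H a b) \<ge> w \<longrightarrow> prec b a)"

definition group_action_bij :: "('g, 'm) monoid_scheme \<Rightarrow> ('g \<Rightarrow> 'x \<Rightarrow> 'x) \<Rightarrow> bool" where
  "group_action_bij G act \<longleftrightarrow>
     group G \<and> (\<forall>g\<in>carrier G. bij (act g)) \<and> act \<one>\<^bsub>G\<^esub> = id \<and>
     (\<forall>g\<in>carrier G. \<forall>k\<in>carrier G. act (g \<otimes>\<^bsub>G\<^esub> k) = act g \<circ> act k)"

definition quasi_automorphic :: "('g, 'm) monoid_scheme \<Rightarrow> ('g \<Rightarrow> 'x \<Rightarrow> 'x) \<Rightarrow> (int \<Rightarrow> 'x set) \<Rightarrow> bool" where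
  "quasi_automorphic G act H \<longleftrightarrow>
     (\<exists>d::int. \<forall>g\<in>carrier G. \<forall>a b.
        \<bar>height2 H (act g a) (act g b) - height2 H a b\<bar> \<le> d)"

definition transl_number :: "('g, 'm) monoid_scheme \<Rightarrow> ('g \<Rightarrow> 'x \<Rightarrow> 'x) \<Rightarrow> (int \<Rightarrow> 'x set) \<Rightarrow> 'x \<Rightarrow> 'g \<Rightarrow> real" where
  "transl_number G act H a g =
     lim (\<lambda>n::nat. real_of_int (height2 H (act (g [^]\<^bsub>G\<^esub> n) a) a) / real n)"

definition induced_le :: "('g, 'm) monoid_scheme \<Rightarrow> ('g \<Rightarrow> 'x \<Rightarrow> 'x) \<Rightarrow> ('x \<Rightarrow> 'x \<Rightarrow> bool) \<Rightarrow> 'g \<Rightarrow> 'g \<Rightarrow> bool" where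
  "induced_le G act prec g h \<longleftrightarrow>
     (\<forall>k\<in>carrier G. \<forall>x. prec (act (k \<otimes>\<^bsub>G\<^esub> g) x) (act (k \<otimes>\<^bsub>G\<^esub> h) x))"

end

theory Submission
  imports Defs
begin

text \<open>Along the orbit of a base point a, the heights n \<mapsto> h(g^n a, a) form a
  quasi-additive sequence, since g^n moves heights by at most the quasi-automorphism
  constant d. Fekete-type estimates then show that h(g^n a, a)/n converges and that its
  limit T(g) exceeds h(g a, a) by at most 4d. On the other hand, h(kg x, k x) differs
  from h(g a, a) by at most 2d, for all k and x. So once T(g) is large enough, every
  h(kg x, k x) passes the threshold w of the half-space order, which forces k x \<preceq> kg x.\<close>

definition quasi_additive :: "real \<Rightarrow> (nat \<Rightarrow> real) \<Rightarrow> bool" where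
  "quasi_additive d f \<longleftrightarrow> (\<forall>n m. \<bar>f (n + m) - f n - f m\<bar> \<le> d)"

lemma quasi_additive_nonneg:
  assumes "quasi_additive d f"
  shows "d \<ge> 0"
  using assms unfolding quasi_additive_def by (metis abs_ge_zero order_trans)

lemma quasi_additive_mult:
  assumes "quasi_additive d f"
  shows "\<bar>f (m * n) - real m * f n\<bar> \<le> (real m + 1) * d"
proof (induction m)
  case 0
  have "\<bar>f (0 + 0) - f 0 - f 0\<bar> \<le> d"
    using assms unfolding quasi_additive_def by blast
  then show ?case by simp
next
  case (Suc m)
  have "\<bar>f (m * n + n) - f (m * n) - f n\<bar> \<le> d"
    using assms unfolding quasi_additive_def by blast
  with Suc show ?case by (simp add: algebra_simps abs_le_iff)
qed

lemma quasi_additive_multiple_ratio: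
  assumes "quasi_additive d f" and "m \<ge> 1" and "n \<ge> 1"
  shows "\<bar>f (m * n) / real (m * n) - f n / real n\<bar> \<le> 2 * d / real n"
proof -
  have d: "d \<ge> 0" using quasi_additive_nonneg[OF assms(1)] .
  have "\<bar>f (m * n) / real (m * n) - f n / real n\<bar> = \<bar>f (m * n) - real m * f n\<bar> / (real m * real n)"
    using assms(2,3) by (simp add: field_simps)
  also have "\<dots> \<le> (real m + 1) * d / (real m * real n)"
    using quasi_additive_mult[OF assms(1)] by (intro divide_right_mono) auto
  also have "\<dots> \<le> 2 * real m * d / (real m * real n)"
    using assms(2) d by (intro divide_right_mono mult_right_mono) auto
  also have "\<dots> = 2 * d / real n"
    using assms(2) by simp
  finally show ?thesis .
qed

lemma quasi_additive_ratio_diff: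
  assumes "quasi_additive d f" and "m \<ge> 1" and "n \<ge> 1"
  shows "\<bar>f m / real m - f n / real n\<bar> \<le> 2 * d / real m + 2 * d / real n"
proof -
  have "\<bar>f (n * m) / real (n * m) - f m / real m\<bar> \<le> 2 * d / real m"
    using quasi_additive_multiple_ratio[OF assms(1,3,2)] .
  moreover have "\<bar>f (m * n) / real (m * n) - f n / real n\<bar> \<le> 2 * d / real n"
    using quasi_additive_multiple_ratio[OF assms] .
  ultimately show ?thesis
    by (simp add: mult.commute abs_le_iff)
qed

lemma quasi_additive_convergent:
  assumes "quasi_additive d f"
  shows "convergent (\<lambda>n. f n / real n)"
proof -
  have d: "d \<ge> 0" using quasi_additive_nonneg[OF assms] .
  have "Cauchy (\<lambda>n. f n / real n)"
  proof (rule metric_CauchyI)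
    fix e :: real
    assume e: "e > 0"
    obtain M :: nat where M: "real M > 4 * d / e"
      using reals_Archimedean2 by blast
    define N where "N = M + 1"
    have N: "real N > 4 * d / e" "N \<ge> 1"
      using M unfolding N_def by auto
    have "2 * d / real N + 2 * d / real N < e"
      using N e by (simp add: field_simps)
    moreover have tail: "2 * d / real k \<le> 2 * d / real N" if "k \<ge> N" for k
      using that N d by (intro divide_left_mono) auto
    ultimately have "dist (f m / real m) (f n / real n) < e" if "m \<ge> N" "n \<ge> N" for m n
      using quasi_additive_ratio_diff[OF assms, of m n] tail[OF that(1)] tail[OF that(2)] that N(2)
      unfolding dist_real_def by linarith
    then show "\<exists>N. \<forall>m\<ge>N. \<forall>n\<ge>N. dist (f m / real m) (f n / real n) < e"
      by blast
  qed
  then show ?thesis by (simp add: Cauchy_convergent_iff)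
qed

lemma quasi_additive_lim_le:
  assumes "quasi_additive d f" and "n \<ge> 1"
  shows "lim (\<lambda>k. f k / real k) \<le> f n / real n + 4 * d / real n"
proof (rule LIMSEQ_le_const2)
  show "(\<lambda>k. f k / real k) \<longlonglongrightarrow> lim (\<lambda>k. f k / real k)"
    using quasi_additive_convergent[OF assms(1)] by (simp add: convergent_LIMSEQ_iff)
  have "f k / real k \<le> f n / real n + 4 * d / real n" if "k \<ge> n" for k
  proof -
    have "2 * d / real k \<le> 2 * d / real n"
      using that assms(2) quasi_additive_nonneg[OF assms(1)] by (intro divide_left_mono) auto
    then show ?thesis
      using quasi_additive_ratio_diff[OF assms(1), of k n] that assms(2) by (simp add: abs_le_iff)
  qed
  then show "\<exists>N. \<forall>k\<ge>N. f k / real k \<le> f n / real n + 4 * d / real n"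
    by blast
qed

lemma height2_trans: "height2 H a c = height2 H a b + height2 H b c"
  unfolding height2_def by simp

lemma height2_swap: "height2 H a b = - height2 H b a"
  unfolding height2_def by simp

lemma quasi_additive_orbit_height:
  assumes act: "group_action_bij G act" and g: "g \<in> carrier G"
    and d: "\<forall>g\<in>carrier G. \<forall>a b. \<bar>height2 H (act g a) (act g b) - height2 H a b\<bar> \<le> d"
  shows "quasi_additive (real_of_int d) (\<lambda>n. real_of_int (height2 H (act (g [^]\<^bsub>G\<^esub> n) a) a))"
  unfolding quasi_additive_def
proof (intro allI)
  fix n m :: nat
  interpret group G using act unfolding group_action_bij_def by blast
  let ?x = "\<lambda>n. act (g [^]\<^bsub>G\<^esub> n) a"
  have "?x (n + m) = act (g [^]\<^bsub>G\<^esub> n) (?x m)"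
    using act g unfolding group_action_bij_def by (simp add: nat_pow_mult[symmetric])
  then have "height2 H (?x (n + m)) a
      = height2 H (act (g [^]\<^bsub>G\<^esub> n) (?x m)) (?x n) + height2 H (?x n) a"
    by (metis height2_trans)
  moreover have "\<bar>height2 H (act (g [^]\<^bsub>G\<^esub> n) (?x m)) (?x n) - height2 H (?x m) a\<bar> \<le> d"
    using d g by blast
  ultimately show "\<bar>real_of_int (height2 H (?x (n + m)) a) - real_of_int (height2 H (?x n) a)
      - real_of_int (height2 H (?x m) a)\<bar> \<le> real_of_int d"
    by linarith
qed

lemma transl_number_le_height:
  assumes act: "group_action_bij G act" and g: "g \<in> carrier G"
    and d: "\<forall>g\<in>carrier G. \<forall>a b. \<bar>height2 H (act g a) (act g b) - height2 H a b\<bar> \<le> d"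
  shows "transl_number G act H a g \<le> height2 H (act g a) a + 4 * d"
proof -
  interpret group G using act unfolding group_action_bij_def by blast
  show ?thesis
    using quasi_additive_lim_le[OF quasi_additive_orbit_height[OF act g d, of a], of 1] g
    unfolding transl_number_def by simp
qed

text \<open>Write h(g x, x) = h(g x, g a) + h(g a, a) + h(a, x): the first and last terms cancel
  up to d since g moves h(x, a) by at most d, and k moves h(g x, x) by at most d.\<close>
lemma height_displacement_ge:
  assumes g: "g \<in> carrier G" and k: "k \<in> carrier G"
    and d: "\<forall>g\<in>carrier G. \<forall>a b. \<bar>height2 H (act g a) (act g b) - height2 H a b\<bar> \<le> d"
  shows "height2 H (act k (act g x)) (act k x) \<ge> height2 H (act g a) a - 2 * d"
proof -
  have "\<bar>height2 H (act k (act g x)) (act k x) - height2 H (act g x) x\<bar> \<le> d"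
    using d k by blast
  moreover have "\<bar>height2 H (act g x) (act g a) - height2 H x a\<bar> \<le> d"
    using d g by blast
  moreover have "height2 H (act g x) x = height2 H (act g x) (act g a) + height2 H (act g a) a + height2 H a x"
    by (metis height2_trans)
  ultimately show ?thesis
    using height2_swap[of H x a] by (simp add: abs_le_iff)
qed

theorem proposition2p6:
  fixes G :: "('g, 'm) monoid_scheme" and act :: "'g \<Rightarrow> 'x \<Rightarrow> 'x"
    and prec :: "'x \<Rightarrow> 'x \<Rightarrow> bool" and H :: "int \<Rightarrow> 'x set"
  assumes "half_space_order prec H"
    and "group_action_bij G act"
    and "quasi_automorphic G act H"
  shows "\<exists>C>0. \<forall>a. \<forall>g\<in>carrier G.
           transl_number G act H a g \<ge> C \<longrightarrow> induced_le G act prec \<one>\<^bsub>G\<^esub> g"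
proof -
  obtain w :: real where w: "\<And>a b. real_of_int (height2 H a b) \<ge> w \<Longrightarrow> prec b a"
    using assms(1) unfolding half_space_order_def by blast
  obtain d :: int
    where d: "\<forall>g\<in>carrier G. \<forall>a b. \<bar>height2 H (act g a) (act g b) - height2 H a b\<bar> \<le> d"
    using assms(3) unfolding quasi_automorphic_def by blast
  have comp: "\<And>g k. g \<in> carrier G \<Longrightarrow> k \<in> carrier G \<Longrightarrow> act (k \<otimes>\<^bsub>G\<^esub> g) = act k \<circ> act g"
    and grp: "group G"
    using assms(2) unfolding group_action_bij_def by auto
  have "induced_le G act prec \<one>\<^bsub>G\<^esub> g"
    if g: "g \<in> carrier G" and T: "transl_number G act H a g \<ge> max 1 (w + 6 * d)" for a g
    unfolding induced_le_def
  proof (intro ballI allI)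
    fix k x
    assume k: "k \<in> carrier G"
    have "real_of_int (height2 H (act k (act g x)) (act k x)) \<ge> w"
      using height_displacement_ge[OF g k d, where x = x and a = a] transl_number_le_height[OF assms(2) g d, of a] T
      by linarith
    then show "prec (act (k \<otimes>\<^bsub>G\<^esub> \<one>\<^bsub>G\<^esub>) x) (act (k \<otimes>\<^bsub>G\<^esub> g) x)"
      using w comp[OF g k] k grp by (simp add: group.is_monoid monoid.r_one)
  qed
  then show ?thesis
    by (intro exI[of _ "max 1 (w + 6 * d)"]) auto
qed

end
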